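(* Let $\mathcal P$ be a non-degenerate polar space of finite rank $n\ge2$ with no thin lines and defect $d=\mathrm{def}(\mathcal P)$, and suppose $\mathfrak N(\mathcal P)$ admits at least one maximal well ordered chain. Then $\mathrm{gr}(\mathcal P)\le 2n+d$ (which equals $d$ when $d$ is infinite).
   Context: A subspace of $\mathcal P$ is a set of points containing every line meeting it in $\ge2$ points; $\mathrm{gr}(\mathcal P)$ is the minimum size of a set of points whose span (smallest subspace containing it) is all of $\mathcal P$. A nice subspace is a subspace containing two mutually disjoint maximal singular subspaces; $\mathfrak N(\mathcal P)$ is the poset of nice subspaces under inclusion. $\mathrm{def}(\mathcal P)$ is the least upper bound of the lengths (cardinality minus one) of the well ordered chains of $\mathfrak N(\mathcal P)$. A maximal well ordered chain is one that is maximal among well ordered chains. *)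

theory Defs
  imports Main
begin

definition partial_linear_space :: "'a set \<Rightarrow> 'a set set \<Rightarrow> bool" where
  "partial_linear_space P L \<longleftrightarrow>
     (\<forall>l\<in>L. l \<subseteq> P \<and> (\<exists>x y. x \<in> l \<and> y \<in> l \<and> x \<noteq> y)) \<and>
     (\<forall>l\<in>L. \<forall>m\<in>L. \<forall>x y. x \<noteq> y \<and> x \<in> l \<and> y \<in> l \<and> x \<in> m \<and> y \<in> m \<longrightarrow> l = m)"

definition collinear :: "'a set set \<Rightarrow> 'a \<Rightarrow> 'a \<Rightarrow> bool" where
  "collinear L p q \<longleftrightarrow> p = q \<or> (\<exists>l\<in>L. p \<in> l \<and> q \<in> l)"

definition polar_space :: "'a set \<Rightarrow> 'a set set \<Rightarrow> bool" where
  "polar_space P L \<longleftrightarrow> partial_linear_space P L \<and>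
     (\<forall>p\<in>P. \<forall>l\<in>L. p \<notin> l \<longrightarrow>
        (\<exists>!q. q \<in> l \<and> collinear L p q) \<or> (\<forall>q\<in>l. collinear L p q))"

definition nondegenerate :: "'a set \<Rightarrow> 'a set set \<Rightarrow> bool" where
  "nondegenerate P L \<longleftrightarrow> \<not> (\<exists>p\<in>P. \<forall>q\<in>P. collinear L p q)"

definition no_thin_lines :: "'a set set \<Rightarrow> bool" where
  "no_thin_lines L \<longleftrightarrow> (\<forall>l\<in>L. infinite l \<or> card l \<ge> 3)"

definition subspace :: "'a set \<Rightarrow> 'a set set \<Rightarrow> 'a set \<Rightarrow> bool" where
  "subspace P L S \<longleftrightarrow> S \<subseteq> P \<and>
     (\<forall>l\<in>L. (\<exists>x y. x \<noteq> y \<and> x \<in> l \<and> y \<in> l \<and> x \<in> S \<and> y \<in> S) \<longrightarrow> l \<subseteq> S)"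

definition singular_subspace :: "'a set \<Rightarrow> 'a set set \<Rightarrow> 'a set \<Rightarrow> bool" where
  "singular_subspace P L S \<longleftrightarrow> subspace P L S \<and> (\<forall>p\<in>S. \<forall>q\<in>S. collinear L p q)"

definition maximal_singular_subspace :: "'a set \<Rightarrow> 'a set set \<Rightarrow> 'a set \<Rightarrow> bool" where
  "maximal_singular_subspace P L M \<longleftrightarrow> singular_subspace P L M \<and>
     (\<forall>S. singular_subspace P L S \<and> M \<subseteq> S \<longrightarrow> S = M)"

definition span :: "'a set \<Rightarrow> 'a set set \<Rightarrow> 'a set \<Rightarrow> 'a set" where
  "span P L X = \<Inter> {S. subspace P L S \<and> X \<subseteq> S}"

definition generating_set :: "'a set \<Rightarrow> 'a set set \<Rightarrow> 'a set \<Rightarrow> bool" where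
  "generating_set P L X \<longleftrightarrow> X \<subseteq> P \<and> span P L X = P"

definition singular_chain :: "'a set \<Rightarrow> 'a set set \<Rightarrow> nat \<Rightarrow> bool" where
  "singular_chain P L k \<longleftrightarrow> (\<exists>S :: nat \<Rightarrow> 'a set.
     (\<forall>i<k. singular_subspace P L (S i) \<and> S i \<noteq> {}) \<and>
     (\<forall>i. Suc i < k \<longrightarrow> S i \<subset> S (Suc i)))"

text \<open>Finite rank n: the longest chains of nonempty singular subspaces have length n
  (so maximal singular subspaces are projective spaces of dimension n-1).\<close>
definition has_rank :: "'a set \<Rightarrow> 'a set set \<Rightarrow> nat \<Rightarrow> bool" where
  "has_rank P L n \<longleftrightarrow> singular_chain P L n \<and> \<not> singular_chain P L (Suc n)"

definition nice_subspace :: "'a set \<Rightarrow> 'a set set \<Rightarrow> 'a set \<Rightarrow> bool" where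
  "nice_subspace P L S \<longleftrightarrow> subspace P L S \<and>
     (\<exists>M1 M2. maximal_singular_subspace P L M1 \<and> maximal_singular_subspace P L M2 \<and>
        M1 \<subseteq> S \<and> M2 \<subseteq> S \<and> M1 \<inter> M2 = {})"

definition wo_chain :: "'a set \<Rightarrow> 'a set set \<Rightarrow> 'a set set \<Rightarrow> bool" where
  "wo_chain P L C \<longleftrightarrow> (\<forall>S\<in>C. nice_subspace P L S) \<and>
     (\<forall>A\<in>C. \<forall>B\<in>C. A \<subseteq> B \<or> B \<subseteq> A) \<and>
     (\<forall>D. D \<subseteq> C \<and> D \<noteq> {} \<longrightarrow> (\<exists>m\<in>D. \<forall>A\<in>D. m \<subseteq> A))"

definition maximal_wo_chain :: "'a set \<Rightarrow> 'a set set \<Rightarrow> 'a set set \<Rightarrow> bool" where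
  "maximal_wo_chain P L C \<longleftrightarrow> wo_chain P L C \<and>
     (\<forall>C'. wo_chain P L C' \<and> C \<subseteq> C' \<longrightarrow> C' = C)"

text \<open>def(P) = d is a natural number: d is the largest length (cardinality minus one)
  of a well ordered chain of nice subspaces.\<close>
definition defect_is_nat :: "'a set \<Rightarrow> 'a set set \<Rightarrow> nat \<Rightarrow> bool" where
  "defect_is_nat P L d \<longleftrightarrow>
     (\<forall>C. wo_chain P L C \<longrightarrow> finite C \<and> card C \<le> Suc d) \<and>
     (\<exists>C. wo_chain P L C \<and> finite C \<and> card C = Suc d)"

definition defect_infinite :: "'a set \<Rightarrow> 'a set set \<Rightarrow> bool" where
  "defect_infinite P L \<longleftrightarrow>
     (\<forall>k::nat. \<exists>C. wo_chain P L C \<and> (infinite C \<or> card C > Suc k))"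

text \<open>For infinite def(P), the cardinal |X| is at most def(P), the least upper bound of the
  cardinalities of the well ordered chains (cardinality minus one agrees with cardinality
  for infinite cardinals, and the supremum is infinite).\<close>
definition card_le_defect :: "'a set \<Rightarrow> 'a set set \<Rightarrow> 'a set \<Rightarrow> bool" where
  "card_le_defect P L X \<longleftrightarrow>
     (\<forall>B :: 'a set set set. (\<forall>C. wo_chain P L C \<longrightarrow> (card_of C, card_of B) \<in> ordLeq)
        \<longrightarrow> (card_of X, card_of B) \<in> ordLeq)"

end

theory Submission
  imports Defs
begin

text \<open>A maximal well ordered chain \<open>C\<close> of nice subspaces contains \<open>P\<close>, and its least member
  \<open>S\<^sub>0\<close> is spanned by two disjoint maximal singular subspaces, hence by at most \<open>2n\<close> points.
  Maximality forces every other member \<open>S\<close> to be spanned by the union of its predecessors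
  together with a single point \<open>p\<^sub>S\<close>. By transfinite induction along \<open>C\<close>, these \<open>p\<^sub>S\<close> and
  the \<open>2n\<close> points span \<open>P\<close>, and there are at most \<open>|C| - 1 \<le> def(P)\<close> of them.\<close>

lemma span_superset: "X \<subseteq> span P L X"
  unfolding span_def by auto

lemma span_least: "subspace P L S \<Longrightarrow> X \<subseteq> S \<Longrightarrow> span P L X \<subseteq> S"
  unfolding span_def by auto

lemma span_mono: "X \<subseteq> Y \<Longrightarrow> span P L X \<subseteq> span P L Y"
  unfolding span_def by auto

lemma subspace_points: "\<forall>l\<in>L. l \<subseteq> P \<Longrightarrow> subspace P L P"
  unfolding subspace_def by auto

lemma subspace_Inter:
  assumes "\<SS> \<noteq> {}" "\<forall>S\<in>\<SS>. subspace P L S"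
  shows "subspace P L (\<Inter>\<SS>)"
  unfolding subspace_def
proof (intro conjI ballI impI)
  show "\<Inter>\<SS> \<subseteq> P" using assms unfolding subspace_def by blast
next
  fix l assume "l \<in> L" "\<exists>x y. x \<noteq> y \<and> x \<in> l \<and> y \<in> l \<and> x \<in> \<Inter>\<SS> \<and> y \<in> \<Inter>\<SS>"
  then show "l \<subseteq> \<Inter>\<SS>" using assms(2) unfolding subspace_def by blast
qed

lemma subspace_span:
  assumes "\<forall>l\<in>L. l \<subseteq> P" "X \<subseteq> P"
  shows "subspace P L (span P L X)"
  unfolding span_def
  using assms subspace_points[OF assms(1)] by (intro subspace_Inter) auto

lemma singular_subspace_span:
  assumes "\<forall>l\<in>L. l \<subseteq> P" "singular_subspace P L M" "Y \<subseteq> M"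
  shows "singular_subspace P L (span P L Y)"
proof -
  have M: "subspace P L M" "M \<subseteq> P" using assms(2) unfolding singular_subspace_def subspace_def by auto
  have "span P L Y \<subseteq> M" using M(1) assms(3) by (rule span_least)
  moreover have "subspace P L (span P L Y)" using subspace_span assms(1,3) M(2) by blast
  ultimately show ?thesis using assms(2) unfolding singular_subspace_def by blast
qed

subsection \<open>Finite rank\<close>

definition span_independent :: "'a set \<Rightarrow> 'a set set \<Rightarrow> 'a list \<Rightarrow> bool" where
  "span_independent P L xs \<longleftrightarrow> (\<forall>i<length xs. xs ! i \<notin> span P L (set (take i xs)))"

lemma span_independent_snoc:
  assumes "span_independent P L xs" "p \<notin> span P L (set xs)"
  shows "span_independent P L (xs @ [p])"
  using assms unfolding span_independent_def
  by (auto simp: nth_append less_Suc_eq)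

lemma span_independent_take:
  "span_independent P L xs \<Longrightarrow> span_independent P L (take k xs)"
  unfolding span_independent_def by (simp add: take_take min_absorb1 less_imp_le)

lemma singular_chain_span_independent:
  assumes lines: "\<forall>l\<in>L. l \<subseteq> P" and M: "singular_subspace P L M"
    and xs: "set xs \<subseteq> M" "span_independent P L xs"
  shows "singular_chain P L (length xs)"
proof -
  define S where "S i = span P L (set (take (Suc i) xs))" for i
  have mem: "xs ! i \<in> S i" if "i < length xs" for i
    unfolding S_def using that by (intro span_superset[THEN subsetD]) (simp add: take_Suc_conv_app_nth)
  have "singular_subspace P L (S i) \<and> S i \<noteq> {}" if "i < length xs" for i
  proof -
    have "set (take (Suc i) xs) \<subseteq> M" using xs(1) set_take_subset by fastforce
    then show ?thesis using singular_subspace_span[OF lines M] mem[OF that] unfolding S_def by blast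
  qed
  moreover have "S i \<subset> S (Suc i)" if "Suc i < length xs" for i
  proof -
    have "S i \<subseteq> S (Suc i)" unfolding S_def by (intro span_mono set_take_subset_set_take) simp
    moreover have "xs ! Suc i \<notin> S i" using xs(2) that unfolding span_independent_def S_def by blast
    ultimately show ?thesis using mem[OF that] by blast
  qed
  ultimately show ?thesis unfolding singular_chain_def by blast
qed

text \<open>A longest independent list in \<open>M\<close> spans \<open>M\<close>; its length is bounded by the rank.\<close>
lemma singular_subspace_finitely_spanned:
  assumes lines: "\<forall>l\<in>L. l \<subseteq> P" and M: "singular_subspace P L M"
    and rank: "\<not> singular_chain P L (Suc n)"
  shows "\<exists>F. finite F \<and> F \<subseteq> M \<and> card F \<le> n \<and> span P L F = M"
proof -
  define Q where "Q xs \<longleftrightarrow> set xs \<subseteq> M \<and> span_independent P L xs" for xs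
  have bound: "length xs \<le> n" if "Q xs" for xs
  proof (rule ccontr)
    assume "\<not> length xs \<le> n"
    then have "length (take (Suc n) xs) = Suc n" by simp
    moreover have "set (take (Suc n) xs) \<subseteq> M" using that set_take_subset unfolding Q_def by fastforce
    moreover have "span_independent P L (take (Suc n) xs)"
      using that span_independent_take unfolding Q_def by blast
    ultimately show False
      using singular_chain_span_independent[OF lines M] rank by metis
  qed
  have "Q []" unfolding Q_def span_independent_def by simp
  then obtain xs where xs: "Q xs" and longest: "\<And>ys. Q ys \<Longrightarrow> length ys \<le> length xs"
    using ex_has_greatest_nat[of Q "[]" length "Suc n"] bound by (metis less_Suc_eq_le)
  have "span P L (set xs) = M"
  proof (rule ccontr)
    assume "span P L (set xs) \<noteq> M"
    moreover have "span P L (set xs) \<subseteq> M"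
      using xs M unfolding Q_def singular_subspace_def by (simp add: span_least)
    ultimately obtain p where "p \<in> M" "p \<notin> span P L (set xs)" by blast
    then have "Q (xs @ [p])" using xs span_independent_snoc unfolding Q_def by auto
    then show False using longest[of "xs @ [p]"] by simp
  qed
  moreover have "card (set xs) \<le> n" using bound[OF xs] card_length le_trans by blast
  ultimately show ?thesis using xs unfolding Q_def by blast
qed

subsection \<open>Maximal well ordered chains of nice subspaces\<close>

lemma nice_subspace_mono:
  "nice_subspace P L S \<Longrightarrow> S \<subseteq> W \<Longrightarrow> subspace P L W \<Longrightarrow> nice_subspace P L W"
  unfolding nice_subspace_def by blast

lemma nice_subspace_subset: "nice_subspace P L S \<Longrightarrow> S \<subseteq> P"
  unfolding nice_subspace_def subspace_def by blast

lemma wo_chain_nice: "wo_chain P L C \<Longrightarrow> S \<in> C \<Longrightarrow> nice_subspace P L S"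
  unfolding wo_chain_def by blast

lemma wo_chain_comparable: "wo_chain P L C \<Longrightarrow> A \<in> C \<Longrightarrow> B \<in> C \<Longrightarrow> A \<subseteq> B \<or> B \<subseteq> A"
  unfolding wo_chain_def by blast

lemma maximal_wo_chain_wo_chain: "maximal_wo_chain P L C \<Longrightarrow> wo_chain P L C"
  unfolding maximal_wo_chain_def by simp

lemma wo_chain_least:
  assumes "wo_chain P L C" "D \<subseteq> C" "D \<noteq> {}"
  obtains m where "m \<in> D" "\<forall>A\<in>D. m \<subseteq> A"
  using assms unfolding wo_chain_def by meson

lemma wo_chain_insert:
  assumes C: "wo_chain P L C" and T: "nice_subspace P L T" "\<forall>A\<in>C. A \<subseteq> T \<or> T \<subseteq> A"
  shows "wo_chain P L (insert T C)"
  unfolding wo_chain_def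
proof (intro conjI allI impI)
  fix D assume D: "D \<subseteq> insert T C \<and> D \<noteq> {}"
  show "\<exists>m\<in>D. \<forall>A\<in>D. m \<subseteq> A"
  proof (cases "D - {T} = {}")
    case True
    then show ?thesis using D by blast
  next
    case False
    moreover have "D - {T} \<subseteq> C" using D by blast
    ultimately obtain m where m: "m \<in> D - {T}" "\<forall>A\<in>D - {T}. m \<subseteq> A"
      using wo_chain_least[OF C] by metis
    then have "m \<in> C" using D by blast
    show ?thesis
    proof (cases "T \<in> D \<and> T \<subseteq> m")
      case True
      then show ?thesis using m(2) by blast
    next
      case False
      then have "T \<in> D \<longrightarrow> m \<subseteq> T" using T(2) \<open>m \<in> C\<close> by blast
      then show ?thesis using m by blast
    qed
  qed
next
  show "\<forall>S\<in>insert T C. nice_subspace P L S" using C T(1) unfolding wo_chain_def by simp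
  show "\<forall>A\<in>insert T C. \<forall>B\<in>insert T C. A \<subseteq> B \<or> B \<subseteq> A"
    using C T(2) unfolding wo_chain_def by simp blast
qed

lemma maximal_wo_chain_comparable_mem:
  assumes "maximal_wo_chain P L C" "nice_subspace P L T" "\<forall>A\<in>C. A \<subseteq> T \<or> T \<subseteq> A"
  shows "T \<in> C"
proof -
  have "wo_chain P L (insert T C)"
    using wo_chain_insert[OF maximal_wo_chain_wo_chain[OF assms(1)] assms(2,3)] .
  then have "insert T C = C" using assms(1) unfolding maximal_wo_chain_def by blast
  then show ?thesis by blast
qed

lemma wo_chain_induct [consumes 2, case_names step]:
  assumes C: "wo_chain P L C" and "S \<in> C"
    and step: "\<And>S. S \<in> C \<Longrightarrow> (\<And>A. A \<in> C \<Longrightarrow> A \<subset> S \<Longrightarrow> Q A) \<Longrightarrow> Q S"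
  shows "Q S"
proof (rule ccontr)
  assume "\<not> Q S"
  then obtain m where m: "m \<in> {A\<in>C. \<not> Q A}" "\<forall>A\<in>{A\<in>C. \<not> Q A}. m \<subseteq> A"
    using wo_chain_least[OF C, of "{A\<in>C. \<not> Q A}"] \<open>S \<in> C\<close> by blast
  have "Q m" by (rule step) (use m in blast)+
  then show False using m(1) by blast
qed

lemma maximal_wo_chain_top:
  assumes lines: "\<forall>l\<in>L. l \<subseteq> P" and N: "nice_subspace P L N" and C: "maximal_wo_chain P L C"
  shows "P \<in> C"
proof (rule maximal_wo_chain_comparable_mem[OF C])
  show "nice_subspace P L P"
    using nice_subspace_mono[OF N nice_subspace_subset[OF N] subspace_points[OF lines]] .
  show "\<forall>A\<in>C. A \<subseteq> P \<or> P \<subseteq> A"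
    using maximal_wo_chain_wo_chain[OF C] nice_subspace_subset wo_chain_nice by blast
qed

lemma maximal_wo_chain_least_minimal:
  assumes "maximal_wo_chain P L C" "S\<^sub>0 \<in> C" "\<forall>A\<in>C. S\<^sub>0 \<subseteq> A"
    and "nice_subspace P L T" "T \<subseteq> S\<^sub>0"
  shows "T = S\<^sub>0"
proof -
  have "T \<in> C" using maximal_wo_chain_comparable_mem[OF assms(1,4)] assms(3,5) by blast
  then show ?thesis using assms(3,5) by blast
qed

definition chain_below :: "'a set set \<Rightarrow> 'a set \<Rightarrow> 'a set" where
  "chain_below C S = \<Union>{A\<in>C. A \<subset> S}"

text \<open>No subspace of \<open>S\<close> fits strictly between the predecessors of \<open>S\<close> and \<open>S\<close> itself:
  it would be comparable with every member of \<open>C\<close>, hence a member.\<close>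
lemma maximal_wo_chain_gap:
  assumes "maximal_wo_chain P L C" "S\<^sub>0 \<in> C" "\<forall>A\<in>C. S\<^sub>0 \<subseteq> A"
    and S: "S \<in> C" "S \<noteq> S\<^sub>0"
    and T: "subspace P L T" "chain_below C S \<subseteq> T" "T \<subseteq> S"
  shows "T = S \<or> T \<subseteq> chain_below C S"
proof -
  have woC: "wo_chain P L C" using maximal_wo_chain_wo_chain[OF assms(1)] .
  have "S\<^sub>0 \<subset> S" using assms(3) S by blast
  then have "S\<^sub>0 \<subseteq> chain_below C S" using assms(2) unfolding chain_below_def by blast
  then have "nice_subspace P L T"
    using nice_subspace_mono[OF wo_chain_nice[OF woC assms(2)] _ T(1)] T(2) by blast
  moreover have "A \<subseteq> T \<or> T \<subseteq> A" if "A \<in> C" for A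
  proof (cases "A \<subset> S")
    case True
    then have "A \<subseteq> chain_below C S" using that unfolding chain_below_def by blast
    then show ?thesis using T(2) by blast
  next
    case False
    then have "S \<subseteq> A" using wo_chain_comparable[OF woC that S(1)] by blast
    then show ?thesis using T(3) by blast
  qed
  ultimately have "T \<in> C" using maximal_wo_chain_comparable_mem[OF assms(1)] by blast
  then show ?thesis using T(3) unfolding chain_below_def by blast
qed

lemma maximal_wo_chain_span_insert_below:
  assumes lines: "\<forall>l\<in>L. l \<subseteq> P" and C: "maximal_wo_chain P L C"
    and S\<^sub>0: "S\<^sub>0 \<in> C" "\<forall>A\<in>C. S\<^sub>0 \<subseteq> A" and S: "S \<in> C" "S \<noteq> S\<^sub>0"
  shows "\<exists>p. S = span P L (insert p (chain_below C S))"
proof -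
  have S_subspace: "subspace P L S"
    using wo_chain_nice[OF maximal_wo_chain_wo_chain[OF C] S(1)] unfolding nice_subspace_def by blast
  have below: "chain_below C S \<subseteq> S" unfolding chain_below_def by blast
  obtain p where p: "p \<in> S" "S \<subseteq> chain_below C S \<or> p \<notin> chain_below C S"
    using S S\<^sub>0(2) by blast
  let ?T = "span P L (insert p (chain_below C S))"
  have T_le: "?T \<subseteq> S" using span_least[OF S_subspace] p(1) below by blast
  have T_ge: "insert p (chain_below C S) \<subseteq> ?T" by (rule span_superset)
  have "?T = S"
  proof (cases "S \<subseteq> chain_below C S")
    case True
    then show ?thesis using T_le T_ge by blast
  next
    case False
    have "insert p (chain_below C S) \<subseteq> P"
      using p(1) below S_subspace unfolding subspace_def by blast
    then have "subspace P L ?T" by (rule subspace_span[OF lines])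
    then have "?T = S \<or> ?T \<subseteq> chain_below C S"
      using maximal_wo_chain_gap[OF C S\<^sub>0 S] T_le T_ge by blast
    then show ?thesis using False p(2) T_ge by blast
  qed
  then show ?thesis by metis
qed

lemma nice_subspace_contains_nice_span:
  assumes lines: "\<forall>l\<in>L. l \<subseteq> P" and rank: "\<not> singular_chain P L (Suc n)"
    and S: "nice_subspace P L S"
  shows "\<exists>F. finite F \<and> F \<subseteq> S \<and> card F \<le> 2 * n \<and> nice_subspace P L (span P L F)"
proof -
  obtain M\<^sub>1 M\<^sub>2 where M: "maximal_singular_subspace P L M\<^sub>1" "maximal_singular_subspace P L M\<^sub>2"
    "M\<^sub>1 \<subseteq> S" "M\<^sub>2 \<subseteq> S" "M\<^sub>1 \<inter> M\<^sub>2 = {}"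
    using S unfolding nice_subspace_def by blast
  obtain F\<^sub>1 F\<^sub>2 where F: "finite F\<^sub>1" "F\<^sub>1 \<subseteq> M\<^sub>1" "card F\<^sub>1 \<le> n" "span P L F\<^sub>1 = M\<^sub>1"
    "finite F\<^sub>2" "F\<^sub>2 \<subseteq> M\<^sub>2" "card F\<^sub>2 \<le> n" "span P L F\<^sub>2 = M\<^sub>2"
    using M(1,2) singular_subspace_finitely_spanned[OF lines _ rank]
    unfolding maximal_singular_subspace_def by meson
  have "card (F\<^sub>1 \<union> F\<^sub>2) \<le> 2 * n" using card_Un_le[of F\<^sub>1 F\<^sub>2] F by linarith
  moreover have "F\<^sub>1 \<union> F\<^sub>2 \<subseteq> S" using F M by blast
  moreover have "M\<^sub>1 \<subseteq> span P L (F\<^sub>1 \<union> F\<^sub>2)" "M\<^sub>2 \<subseteq> span P L (F\<^sub>1 \<union> F\<^sub>2)"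
    using span_mono[of F\<^sub>1 "F\<^sub>1 \<union> F\<^sub>2" P L] span_mono[of F\<^sub>2 "F\<^sub>1 \<union> F\<^sub>2" P L] F by auto
  moreover have "subspace P L (span P L (F\<^sub>1 \<union> F\<^sub>2))"
    using subspace_span[OF lines] \<open>F\<^sub>1 \<union> F\<^sub>2 \<subseteq> S\<close> nice_subspace_subset[OF S] by blast
  ultimately show ?thesis using M F(1,5) unfolding nice_subspace_def by blast
qed

lemma wo_chain_generating_set_insert_below:
  assumes lines: "\<forall>l\<in>L. l \<subseteq> P" and C: "wo_chain P L C" "P \<in> C"
    and S\<^sub>0: "S\<^sub>0 \<in> C" "span P L F = S\<^sub>0" "F \<subseteq> P"
    and f: "\<And>S. S \<in> C \<Longrightarrow> S \<noteq> S\<^sub>0 \<Longrightarrow> S = span P L (insert (f S) (chain_below C S))"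
  shows "generating_set P L (F \<union> f ` (C - {S\<^sub>0}))"
proof -
  define X where "X = F \<union> f ` (C - {S\<^sub>0})"
  have "f S \<in> P" if "S \<in> C" "S \<noteq> S\<^sub>0" for S
  proof -
    have "f S \<in> span P L (insert (f S) (chain_below C S))" by (rule span_superset[THEN subsetD]) simp
    then have "f S \<in> S" by (simp only: f[OF that, symmetric])
    then show ?thesis using nice_subspace_subset[OF wo_chain_nice[OF C(1) that(1)]] by blast
  qed
  then have "f ` (C - {S\<^sub>0}) \<subseteq> P" by (simp add: image_subset_iff)
  then have XP: "X \<subseteq> P" using S\<^sub>0(3) unfolding X_def by simp
  then have span_X_le: "\<And>Y. Y \<subseteq> span P L X \<Longrightarrow> span P L Y \<subseteq> span P L X"
    using span_least[OF subspace_span[OF lines]] by blast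
  have "S \<subseteq> span P L X" if "S \<in> C" for S
    using C(1) that
  proof (induction rule: wo_chain_induct)
    case (step S)
    show ?case
    proof (cases "S = S\<^sub>0")
      case True
      then show ?thesis using S\<^sub>0(2) span_mono[of F X P L] unfolding X_def by blast
    next
      case False
      have "chain_below C S \<subseteq> span P L X" using step unfolding chain_below_def by blast
      moreover have "f S \<in> span P L X"
        using step(1) False unfolding X_def by (intro span_superset[THEN subsetD]) blast
      ultimately have "span P L (insert (f S) (chain_below C S)) \<subseteq> span P L X" by (intro span_X_le) simp
      then show ?thesis by (simp only: f[OF step(1) False, symmetric])
    qed
  qed
  then have "span P L X = P"
    using C(2) span_least[OF subspace_points[OF lines] XP] by blast
  then show ?thesis using XP unfolding generating_set_def X_def by blast
qed

lemma maximal_wo_chain_generating_set: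
  assumes lines: "\<forall>l\<in>L. l \<subseteq> P" and rank: "\<not> singular_chain P L (Suc n)"
    and N: "nice_subspace P L N" and C: "maximal_wo_chain P L C"
  shows "\<exists>S\<^sub>0 F f. S\<^sub>0 \<in> C \<and> finite F \<and> card F \<le> 2 * n \<and> generating_set P L (F \<union> f ` (C - {S\<^sub>0}))"
proof -
  have woC: "wo_chain P L C" using maximal_wo_chain_wo_chain[OF C] .
  have PC: "P \<in> C" using maximal_wo_chain_top[OF lines N C] .
  obtain S\<^sub>0 where S\<^sub>0: "S\<^sub>0 \<in> C" "\<forall>A\<in>C. S\<^sub>0 \<subseteq> A"
    using wo_chain_least[OF woC, of C] PC by blast
  obtain F where F: "finite F" "F \<subseteq> S\<^sub>0" "card F \<le> 2 * n" "nice_subspace P L (span P L F)"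
    using nice_subspace_contains_nice_span[OF lines rank wo_chain_nice[OF woC S\<^sub>0(1)]] by blast
  have S\<^sub>0_subspace: "subspace P L S\<^sub>0" using wo_chain_nice[OF woC S\<^sub>0(1)] unfolding nice_subspace_def by blast
  have span_F: "span P L F = S\<^sub>0"
    using maximal_wo_chain_least_minimal[OF C S\<^sub>0 F(4)] span_least[OF S\<^sub>0_subspace F(2)] .
  have FP: "F \<subseteq> P" using F(2) S\<^sub>0_subspace unfolding subspace_def by blast
  define f where "f S = (SOME p. S = span P L (insert p (chain_below C S)))" for S
  have f: "S = span P L (insert (f S) (chain_below C S))" if "S \<in> C" "S \<noteq> S\<^sub>0" for S
    unfolding f_def using someI_ex[OF maximal_wo_chain_span_insert_below[OF lines C S\<^sub>0 that]] .
  have "generating_set P L (F \<union> f ` (C - {S\<^sub>0}))"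
    using wo_chain_generating_set_insert_below[OF lines woC PC S\<^sub>0(1) span_F FP f] .
  then show ?thesis using S\<^sub>0(1) F(1,3) by blast
qed

subsection \<open>Counting the generators\<close>

lemma card_Un_image_chain_le:
  assumes "defect_is_nat P L d" "wo_chain P L C" "S\<^sub>0 \<in> C" "finite F"
  shows "finite (F \<union> f ` (C - {S\<^sub>0})) \<and> card (F \<union> f ` (C - {S\<^sub>0})) \<le> card F + d"
proof -
  have C: "finite C" "card C \<le> Suc d" using assms(1,2) unfolding defect_is_nat_def by blast+
  have "card (f ` (C - {S\<^sub>0})) \<le> d"
    using card_image_le[of "C - {S\<^sub>0}" f] C assms(3) by (simp add: card_Diff_singleton)
  then show ?thesis using card_Un_le[of F "f ` (C - {S\<^sub>0})"] C(1) assms(4) by simp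
qed

lemma defect_infinite_bound_infinite:
  assumes "defect_infinite P L" "\<forall>C. wo_chain P L C \<longrightarrow> (card_of C, card_of B) \<in> ordLeq"
  shows "infinite B"
proof
  assume fin: "finite B"
  obtain C where C: "wo_chain P L C" "infinite C \<or> card C > Suc (card B)"
    using assms(1) unfolding defect_infinite_def by blast
  have le: "(card_of C, card_of B) \<in> ordLeq" using assms(2) C(1) by blast
  then obtain g where "inj_on g C" "g ` C \<subseteq> B" by (auto simp flip: card_of_ordLeq)
  then have "card C \<le> card B" using fin by (rule card_inj_on_le)
  then show False using C(2) card_of_ordLeq_finite[OF le fin] by simp
qed

lemma card_le_defect_Un_image_chain:
  assumes "defect_infinite P L" "wo_chain P L C" "finite F"
  shows "card_le_defect P L (F \<union> f ` (C - {S\<^sub>0}))"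
  unfolding card_le_defect_def
proof (intro allI impI)
  fix B :: "'a set set set"
  assume B: "\<forall>C. wo_chain P L C \<longrightarrow> (card_of C, card_of B) \<in> ordLeq"
  have inf: "infinite B" using defect_infinite_bound_infinite[OF assms(1) B] .
  have "(card_of (f ` (C - {S\<^sub>0})), card_of (C - {S\<^sub>0})) \<in> ordLeq" by (rule card_of_image)
  also have "(card_of (C - {S\<^sub>0}), card_of C) \<in> ordLeq" by (rule card_of_mono1) blast
  also have "(card_of C, card_of B) \<in> ordLeq" using B assms(2) by blast
  finally have "(card_of (f ` (C - {S\<^sub>0})), card_of B) \<in> ordLeq" .
  moreover have "(card_of F, card_of B) \<in> ordLess"
    by (rule finite_ordLess_infinite[OF card_of_Well_order card_of_Well_order])
      (simp_all add: Field_card_of assms(3) inf)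
  then have "(card_of F, card_of B) \<in> ordLeq" by (rule ordLess_imp_ordLeq)
  ultimately show "(card_of (F \<union> f ` (C - {S\<^sub>0})), card_of B) \<in> ordLeq"
    by (intro card_of_Un_ordLeq_infinite_Field[OF _ _ _ card_of_Card_order])
      (simp_all add: Field_card_of inf)
qed

theorem mainTheorem16:
  fixes P :: "'a set" and L :: "'a set set" and n :: nat
  assumes "polar_space P L"
    and "nondegenerate P L"
    and "has_rank P L n"
    and "n \<ge> 2"
    and "no_thin_lines L"
    and "\<exists>C. maximal_wo_chain P L C"
  shows "(\<forall>d. defect_is_nat P L d \<longrightarrow>
            (\<exists>X. generating_set P L X \<and> finite X \<and> card X \<le> 2 * n + d))
       \<and> (defect_infinite P L \<longrightarrow>
            (\<exists>X. generating_set P L X \<and> card_le_defect P L X))"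
proof (cases "\<exists>N. nice_subspace P L N")
  case True
  have lines: "\<forall>l\<in>L. l \<subseteq> P"
    using assms(1) unfolding polar_space_def partial_linear_space_def by blast
  have rank: "\<not> singular_chain P L (Suc n)" using assms(3) unfolding has_rank_def by blast
  obtain C where C: "maximal_wo_chain P L C" using assms(6) by blast
  have woC: "wo_chain P L C" using maximal_wo_chain_wo_chain[OF C] .
  obtain S\<^sub>0 F f where S\<^sub>0: "S\<^sub>0 \<in> C" and F: "finite F" "card F \<le> 2 * n"
    and gen: "generating_set P L (F \<union> f ` (C - {S\<^sub>0}))"
    using True maximal_wo_chain_generating_set[OF lines rank _ C] by blast
  have "finite (F \<union> f ` (C - {S\<^sub>0})) \<and> card (F \<union> f ` (C - {S\<^sub>0})) \<le> 2 * n + d"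
    if "defect_is_nat P L d" for d
    using card_Un_image_chain_le[OF that woC S\<^sub>0 F(1), of f] F(2) by linarith
  moreover have "card_le_defect P L (F \<union> f ` (C - {S\<^sub>0}))" if "defect_infinite P L"
    using card_le_defect_Un_image_chain[OF that woC F(1)] .
  ultimately show ?thesis using gen by blast
next
  case False
  then have empty: "wo_chain P L C \<Longrightarrow> C = {}" for C using wo_chain_nice by blast
  then have "\<not> defect_is_nat P L d" for d unfolding defect_is_nat_def by force
  moreover have "\<not> defect_infinite P L" using empty unfolding defect_infinite_def by force
  ultimately show ?thesis by blast
qed

end
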